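(* Let $X^n=(X[1],\dots,X[n])$ be any random sequence in $\{0,1\}^n$ and, for $t=1,\dots,n$, let $G_T[t]=(G_1[t],G_2[t],G_3[t])$ be i.i.d. over $t$ and independent of $X^n$, with $G_i[t]\sim\mathcal{B}(p_i)$, $i=1,2,3$, where $0\le p_2\le p_1\le 1$, $p_1>0$, and $\Pr[G_i[t]=1,G_j[t]=1]=0$ for all $i\ne j$ in $\{1,2,3\}$. Let $Y_i[t]=G_i[t]X[t]$ for $i=1,2$. Then $$H\left(Y_2^n \mid G_3^n X^n, G_T^n\right) \ge \frac{p_2}{p_1} H\left(Y_1^n \mid G_3^n X^n, G_T^n\right),$$ where $G_3^nX^n$ denotes the sequence $(G_3[1]X[1],\dots,G_3[n]X[n])$ and $G_T^n=(G_T[1],\dots,G_T[n])$.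
   Context: This is a binary fading broadcast channel from one transmitter to two receivers with no CSIT, meaning that the transmit sequence $X^n$ (with any input distribution) is independent of the channel gains. $\mathcal{B}(p)$ denotes the Bernoulli distribution taking value 1 with probability $p$. $H$ denotes Shannon entropy. *)

theory Defs
  imports "HOL-Probability.Probability"
begin

definition cond_entropy :: "'w pmf \<Rightarrow> ('w \<Rightarrow> 'y) \<Rightarrow> ('w \<Rightarrow> 'z) \<Rightarrow> real" where
  "cond_entropy D f g =
     (let J = map_pmf (\<lambda>w. (f w, g w)) D; M = map_pmf g D in
      - (\<Sum>yz\<in>set_pmf J. pmf J yz * log 2 (pmf J yz / pmf M (snd yz))))"

type_synonym gain = "bool \<times> bool \<times> bool"

definition G1 :: "gain \<Rightarrow> bool" where "G1 g = fst g"
definition G2 :: "gain \<Rightarrow> bool" where "G2 g = fst (snd g)"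
definition G3 :: "gain \<Rightarrow> bool" where "G3 g = snd (snd g)"

text \<open>Channel output sequence G_i[t] X[t], t = 1..n (bits; product = conjunction).\<close>
definition out_seq :: "(gain \<Rightarrow> bool) \<Rightarrow> bool list \<Rightarrow> gain list \<Rightarrow> bool list" where
  "out_seq Gi xs gs = map2 (\<lambda>x g. Gi g \<and> x) xs gs"

end

theory Submission
  imports Defs
begin

text \<open>
  Given the gains, Y_i together with G_3 X reveals exactly the bits of X in the slots
  S_i \<union> S_3, where S_i is the set of times with G_i = 1; so the conditional entropy is the
  average over the gains of H(X on S_i \<union> S_3) - H(X on S_3). As G_1 and G_2 are both disjoint
  from G_3, the pair (G_2, G_3) has the law of (G_1 \<and> C, G_3) for an independent coin
  C ~ B(p_2/p_1): S_2 arises from S_1 by keeping each slot independently with probability p_2/p_1.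
  Write H(X on S_1 \<union> S_3) - H(X on S_3) as the telescoping sum of the increments of the slots
  of S_1 in time order. By submodularity of T \<mapsto> H(X on T), the thinned set gains at least
  the increments of the slots it keeps, and averaging over the coins gives the factor p_2/p_1.
\<close>

section \<open>Entropy of a random variable\<close>

definition entropy_rv :: "'w pmf \<Rightarrow> ('w \<Rightarrow> 'y) \<Rightarrow> real" where
  "entropy_rv P f = - measure_pmf.expectation P (\<lambda>w. log 2 (pmf (map_pmf f P) (f w)))"

lemma entropy_rv_map_pmf: "entropy_rv (map_pmf F P) f = entropy_rv P (\<lambda>w. f (F w))"
  unfolding entropy_rv_def by (simp add: map_pmf_comp o_def)

lemma entropy_rv_cong:
  assumes "\<And>v w. v \<in> set_pmf P \<Longrightarrow> w \<in> set_pmf P \<Longrightarrow> f v = f w \<longleftrightarrow> g v = g w"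
  shows "entropy_rv P f = entropy_rv P g"
proof -
  have "pmf (map_pmf f P) (f w) = pmf (map_pmf g P) (g w)" if "w \<in> set_pmf P" for w
  proof -
    have "f -` {f w} \<inter> set_pmf P = g -` {g w} \<inter> set_pmf P"
      using assms that by auto
    then show ?thesis
      by (metis pmf_map measure_Int_set_pmf)
  qed
  then show ?thesis
    unfolding entropy_rv_def
    by (intro arg_cong[where f = uminus] integral_cong_AE) (auto simp: AE_measure_pmf_iff)
qed

lemma cond_entropy_eq_entropy_rv_diff:
  assumes fin: "finite (set_pmf D)"
  shows "cond_entropy D f g = entropy_rv D (\<lambda>w. (f w, g w)) - entropy_rv D g"
proof -
  define J where "J = map_pmf (\<lambda>w. (f w, g w)) D"
  define M where "M = map_pmf g D"
  have "(\<Sum>yz\<in>set_pmf J. pmf J yz * log 2 (pmf J yz / pmf M (snd yz)))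
      = measure_pmf.expectation J (\<lambda>yz. log 2 (pmf J yz / pmf M (snd yz)))"
    using fin by (subst integral_measure_pmf_real) (auto simp: J_def mult.commute)
  also have "\<dots> = measure_pmf.expectation D (\<lambda>w. log 2 (pmf J (f w, g w) / pmf M (g w)))"
    by (simp add: J_def)
  also have "\<dots> = measure_pmf.expectation D (\<lambda>w. log 2 (pmf J (f w, g w)) - log 2 (pmf M (g w)))"
  proof (intro integral_cong_AE)
    show "AE w in D. log 2 (pmf J (f w, g w) / pmf M (g w)) = log 2 (pmf J (f w, g w)) - log 2 (pmf M (g w))"
      by (auto simp: AE_measure_pmf_iff J_def M_def log_divide pmf_eq_0_set_pmf)
  qed simp_all
  also have "\<dots> = measure_pmf.expectation D (\<lambda>w. log 2 (pmf J (f w, g w)))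
                 - measure_pmf.expectation D (\<lambda>w. log 2 (pmf M (g w)))"
    using fin by (intro Bochner_Integration.integral_diff integrable_measure_pmf_finite)
  finally show ?thesis
    unfolding cond_entropy_def Let_def entropy_rv_def J_def[symmetric] M_def[symmetric] by simp
qed

lemma expectation_pair_pmf:
  fixes h :: "'a \<times> 'b \<Rightarrow> real"
  assumes fP: "finite (set_pmf P)" and fQ: "finite (set_pmf Q)"
  shows "measure_pmf.expectation (pair_pmf P Q) h
       = measure_pmf.expectation Q (\<lambda>y. measure_pmf.expectation P (\<lambda>x. h (x, y)))"
proof -
  have "measure_pmf.expectation (pair_pmf P Q) h
      = (\<Sum>w\<in>set_pmf P \<times> set_pmf Q. h w * pmf (pair_pmf P Q) w)"
    using fP fQ by (intro integral_measure_pmf_real) auto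
  also have "\<dots> = (\<Sum>x\<in>set_pmf P. \<Sum>y\<in>set_pmf Q. h (x, y) * (pmf P x * pmf Q y))"
    by (simp add: sum.cartesian_product split_beta pmf_pair[symmetric])
  also have "\<dots> = (\<Sum>y\<in>set_pmf Q. (\<Sum>x\<in>set_pmf P. h (x, y) * pmf P x) * pmf Q y)"
    by (subst sum.swap) (simp add: sum_distrib_right mult.assoc)
  also have "\<dots> = measure_pmf.expectation Q (\<lambda>y. measure_pmf.expectation P (\<lambda>x. h (x, y)))"
    using fP fQ by (simp add: integral_measure_pmf_real[of "set_pmf _"])
  finally show ?thesis .
qed

lemma pmf_map_pair_pmf_section:
  "pmf (map_pmf (\<lambda>(x, y). (F x y, y)) (pair_pmf P Q)) (z, y)
   = pmf (map_pmf (\<lambda>x. F x y) P) z * pmf Q y"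
proof -
  have "map_pmf (\<lambda>(x, y). (F x y, y)) (pair_pmf P Q) = bind_pmf Q (\<lambda>y. map_pmf (\<lambda>x. (F x y, y)) P)"
    unfolding pair_pmf_def map_bind_pmf map_return_pmf
    by (subst bind_commute_pmf) (simp add: map_pmf_def)
  then have "pmf (map_pmf (\<lambda>(x, y). (F x y, y)) (pair_pmf P Q)) (z, y)
     = measure_pmf.expectation Q (\<lambda>y'. pmf (map_pmf (\<lambda>x. (F x y', y')) P) (z, y))"
    by (simp add: pmf_bind)
  also have "\<dots> = pmf (map_pmf (\<lambda>x. (F x y, y)) P) (z, y) * pmf Q y"
    by (subst integral_measure_pmf_real[of "{y}"]) (auto simp: pmf_eq_0_set_pmf)
  also have "pmf (map_pmf (\<lambda>x. (F x y, y)) P) (z, y) = pmf (map_pmf (\<lambda>x. F x y) P) z"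
    by (simp add: pmf_map vimage_def)
  finally show ?thesis .
qed

lemma entropy_rv_pair_pmf:
  assumes fP: "finite (set_pmf P)" and fQ: "finite (set_pmf Q)"
  shows "entropy_rv (pair_pmf P Q) (\<lambda>(x, y). (F x y, y))
       = entropy_rv Q (\<lambda>y. y) + measure_pmf.expectation Q (\<lambda>y. entropy_rv P (\<lambda>x. F x y))"
proof -
  let ?H = "\<lambda>x y. log 2 (pmf (map_pmf (\<lambda>x'. F x' y) P) (F x y))"
  have "entropy_rv (pair_pmf P Q) (\<lambda>(x, y). (F x y, y))
      = - measure_pmf.expectation (pair_pmf P Q) (\<lambda>(x, y). ?H x y + log 2 (pmf Q y))"
    unfolding entropy_rv_def
  proof (intro arg_cong[where f = uminus] integral_cong_AE)
    show "AE w in pair_pmf P Q.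
        log 2 (pmf (map_pmf (\<lambda>(x, y). (F x y, y)) (pair_pmf P Q)) (case w of (x, y) \<Rightarrow> (F x y, y)))
        = (case w of (x, y) \<Rightarrow> ?H x y + log 2 (pmf Q y))"
      by (auto simp: AE_measure_pmf_iff pmf_map_pair_pmf_section log_mult pmf_eq_0_set_pmf)
  qed auto
  also have "\<dots> = - measure_pmf.expectation Q (\<lambda>y. measure_pmf.expectation P (\<lambda>x. ?H x y) + log 2 (pmf Q y))"
    using fP fQ by (simp add: expectation_pair_pmf integrable_measure_pmf_finite)
  also have "\<dots> = entropy_rv Q (\<lambda>y. y) + measure_pmf.expectation Q (\<lambda>y. entropy_rv P (\<lambda>x. F x y))"
    using fQ by (simp add: entropy_rv_def integrable_measure_pmf_finite)
  finally show ?thesis .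
qed

section \<open>Submodularity of entropy\<close>

lemma expectation_log_le:
  assumes fin: "finite (set_pmf J)" and pos: "\<And>t. t \<in> set_pmf J \<Longrightarrow> 0 < u t"
  shows "measure_pmf.expectation J (\<lambda>t. log 2 (u t)) \<le> (measure_pmf.expectation J u - 1) / ln 2"
proof -
  have "measure_pmf.expectation J (\<lambda>t. log 2 (u t)) \<le> measure_pmf.expectation J (\<lambda>t. (u t - 1) / ln 2)"
    using pos ln_le_minus_one
    by (intro integral_mono_AE integrable_measure_pmf_finite fin)
       (auto simp: AE_measure_pmf_iff log_def divide_right_mono)
  also have "\<dots> = (measure_pmf.expectation J u - 1) / ln 2"
    using fin by (simp add: integrable_measure_pmf_finite)
  finally show ?thesis .
qed

lemma sum_pmf_eq_pmf_map_snd: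
  assumes "finite A" and "fst ` set_pmf K \<subseteq> A"
  shows "(\<Sum>a\<in>A. pmf K (a, c)) = pmf (map_pmf snd K) c"
proof -
  have "snd -` {c} \<inter> set_pmf K = (A \<times> {c}) \<inter> set_pmf K"
    using assms(2) by force
  then have "pmf (map_pmf snd K) c = measure_pmf.prob K (A \<times> {c})"
    by (metis pmf_map measure_Int_set_pmf)
  also have "\<dots> = (\<Sum>a\<in>A. pmf K (a, c))"
    using assms(1) by (simp add: measure_measure_pmf_finite sum.cartesian_product')
  finally show ?thesis by simp
qed

text \<open>The summand is the law under which \<open>a\<close> and \<open>b\<close> are conditionally independent given \<open>c\<close>,
  so the sum is its mass on the support of \<open>J\<close>.\<close>

lemma sum_marginal_ratio_le_1:
  fixes J :: "('a \<times> 'b \<times> 'c) pmf"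
  assumes fin: "finite (set_pmf J)"
  defines "KAC \<equiv> map_pmf (\<lambda>(a, b, c). (a, c)) J"
    and "KBC \<equiv> map_pmf (\<lambda>(a, b, c). (b, c)) J"
    and "KC \<equiv> map_pmf (\<lambda>(a, b, c). c) J"
  shows "(\<Sum>(a, b, c)\<in>set_pmf J. pmf KAC (a, c) * pmf KBC (b, c) / pmf KC c) \<le> 1"
proof -
  define A where "A = fst ` set_pmf KAC"
  define B where "B = fst ` set_pmf KBC"
  define C where "C = set_pmf KC"
  have fin': "finite A" "finite B" "finite C"
    using fin by (simp_all add: A_def B_def C_def KAC_def KBC_def KC_def)
  have "(\<Sum>(a, b, c)\<in>set_pmf J. pmf KAC (a, c) * pmf KBC (b, c) / pmf KC c)
      \<le> (\<Sum>(a, b, c)\<in>A \<times> B \<times> C. pmf KAC (a, c) * pmf KBC (b, c) / pmf KC c)"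
  proof (rule sum_mono2)
    show "set_pmf J \<subseteq> A \<times> B \<times> C"
      by (force simp: A_def B_def C_def KAC_def KBC_def KC_def)
  qed (use fin' in auto)
  also have "\<dots> = (\<Sum>c\<in>C. (\<Sum>a\<in>A. pmf KAC (a, c)) * (\<Sum>b\<in>B. pmf KBC (b, c)) / pmf KC c)"
    by (simp add: sum.cartesian_product[symmetric] sum.swap[of _ C] sum_product sum_divide_distrib)
  also have "\<dots> = (\<Sum>c\<in>C. pmf KC c)"
  proof (rule sum.cong)
    fix c assume "c \<in> C"
    then have "pmf KC c \<noteq> 0"
      by (simp add: C_def set_pmf_eq)
    moreover have "map_pmf snd KAC = KC" "map_pmf snd KBC = KC"
      by (simp_all add: KAC_def KBC_def KC_def map_pmf_comp case_prod_unfold)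
    ultimately show "(\<Sum>a\<in>A. pmf KAC (a, c)) * (\<Sum>b\<in>B. pmf KBC (b, c)) / pmf KC c = pmf KC c"
      using fin' by (simp add: A_def B_def sum_pmf_eq_pmf_map_snd)
  qed simp
  also have "\<dots> = 1"
    using fin' by (simp add: C_def sum_pmf_eq_1)
  finally show ?thesis .
qed

lemma entropy_rv_submodular_triple:
  fixes J :: "('a \<times> 'b \<times> 'c) pmf"
  assumes fin: "finite (set_pmf J)"
  shows "entropy_rv J (\<lambda>t. t) + entropy_rv J (\<lambda>(a, b, c). c)
       \<le> entropy_rv J (\<lambda>(a, b, c). (a, c)) + entropy_rv J (\<lambda>(a, b, c). (b, c))"
proof -
  define KAC where "KAC = map_pmf (\<lambda>(a, b, c). (a, c)) J"
  define KBC where "KBC = map_pmf (\<lambda>(a, b, c). (b, c)) J"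
  define KC where "KC = map_pmf (\<lambda>(a, b, c). c) J"
  define u where "u = (\<lambda>(a, b, c). pmf KAC (a, c) * pmf KBC (b, c) / (pmf J (a, b, c) * pmf KC c))"
  have pos: "0 < pmf KAC (a, c)" "0 < pmf KBC (b, c)" "0 < pmf KC c" "0 < pmf J (a, b, c)"
    if "(a, b, c) \<in> set_pmf J" for a b c
    using that by (auto simp: KAC_def KBC_def KC_def pmf_positive_iff image_iff intro!: bexI[OF _ that])
  have log_u: "log 2 (u (a, b, c))
      = log 2 (pmf KAC (a, c)) + log 2 (pmf KBC (b, c)) - log 2 (pmf J (a, b, c)) - log 2 (pmf KC c)"
    if "(a, b, c) \<in> set_pmf J" for a b c
    using pos[OF that] by (simp add: u_def log_mult log_divide)
  have "entropy_rv J (\<lambda>t. t) + entropy_rv J (\<lambda>(a, b, c). c)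
       - entropy_rv J (\<lambda>(a, b, c). (a, c)) - entropy_rv J (\<lambda>(a, b, c). (b, c))
      = measure_pmf.expectation J (\<lambda>t. log 2 (u t))"
  proof -
    have log_u_AE: "AE t in J. log 2 (u t) = log 2 (pmf KAC (case t of (a, b, c) \<Rightarrow> (a, c)))
        + log 2 (pmf KBC (case t of (a, b, c) \<Rightarrow> (b, c)))
        - log 2 (pmf J t) - log 2 (pmf KC (case t of (a, b, c) \<Rightarrow> c))"
      by (auto simp: AE_measure_pmf_iff log_u)
    show ?thesis
      using fin
      unfolding entropy_rv_def KAC_def[symmetric] KBC_def[symmetric] KC_def[symmetric] map_pmf_ident
      by (subst integral_cong_AE[OF _ _ log_u_AE]) (simp_all add: integrable_measure_pmf_finite)
  qed
  also have "\<dots> \<le> (measure_pmf.expectation J u - 1) / ln 2"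
    using fin pos by (intro expectation_log_le) (auto simp: u_def)
  also have "\<dots> \<le> 0"
  proof -
    have "measure_pmf.expectation J u = (\<Sum>t\<in>set_pmf J. u t * pmf J t)"
      using fin by (intro integral_measure_pmf_real) auto
    also have "\<dots> = (\<Sum>(a, b, c)\<in>set_pmf J. pmf KAC (a, c) * pmf KBC (b, c) / pmf KC c)"
      by (intro sum.cong) (auto simp: u_def set_pmf_iff)
    also have "\<dots> \<le> 1"
      unfolding KAC_def KBC_def KC_def by (rule sum_marginal_ratio_le_1[OF fin])
    finally show ?thesis
      by (simp add: divide_nonpos_pos)
  qed
  finally show ?thesis by simp
qed

lemma entropy_rv_submodular:
  assumes "finite (set_pmf P)"
  shows "entropy_rv P (\<lambda>w. (f w, g w, h w)) + entropy_rv P h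
       \<le> entropy_rv P (\<lambda>w. (f w, h w)) + entropy_rv P (\<lambda>w. (g w, h w))"
  using entropy_rv_submodular_triple[of "map_pmf (\<lambda>w. (f w, g w, h w)) P"] assms
  by (simp add: entropy_rv_map_pmf)

definition submodular :: "('a set \<Rightarrow> real) \<Rightarrow> bool" where
  "submodular h \<longleftrightarrow> (\<forall>X Y. h (X \<union> Y) + h (X \<inter> Y) \<le> h X + h Y)"

text \<open>Diminishing returns: adding \<open>j\<close> to \<open>A \<union> S \<inter> {..<j}\<close> gains no more than adding it to
  the smaller set \<open>A \<union> T \<inter> {..<j}\<close>.\<close>

lemma submodular_increments_le:
  fixes h :: "nat set \<Rightarrow> real"
  assumes sm: "submodular h" and TS: "T \<subseteq> S"
  shows "(\<Sum>j<k. if j \<in> T then h (A \<union> S \<inter> {..<Suc j}) - h (A \<union> S \<inter> {..<j}) else 0)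
       \<le> h (A \<union> T \<inter> {..<k}) - h A"
proof (induction k)
  case (Suc k)
  have "(if k \<in> T then h (A \<union> S \<inter> {..<Suc k}) - h (A \<union> S \<inter> {..<k}) else 0)
      \<le> h (A \<union> T \<inter> {..<Suc k}) - h (A \<union> T \<inter> {..<k})"
  proof (cases "k \<in> T")
    case True
    have un: "(A \<union> T \<inter> {..<Suc k}) \<union> (A \<union> S \<inter> {..<k}) = A \<union> S \<inter> {..<Suc k}"
      and int: "(A \<union> T \<inter> {..<Suc k}) \<inter> (A \<union> S \<inter> {..<k}) = A \<union> T \<inter> {..<k}"
      using TS True by (auto simp: lessThan_Suc)
    show ?thesis
      using sm[unfolded submodular_def, rule_format, of "A \<union> T \<inter> {..<Suc k}" "A \<union> S \<inter> {..<k}"]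
      unfolding un int using True by simp
  next
    case False
    then have "T \<inter> {..<Suc k} = T \<inter> {..<k}"
      by (auto simp: lessThan_Suc)
    with False show ?thesis by simp
  qed
  with Suc.IH show ?case by simp
qed simp

definition bits_on :: "nat set \<Rightarrow> bool list \<Rightarrow> nat \<Rightarrow> bool" where
  "bits_on S xs = (\<lambda>t. t \<in> S \<and> xs ! t)"

lemma bits_on_eq_iff: "bits_on S xs = bits_on S ys \<longleftrightarrow> (\<forall>t\<in>S. xs ! t = ys ! t)"
  by (auto simp: bits_on_def fun_eq_iff)

lemma bits_on_Un_eq_iff:
  "bits_on (A \<union> B) xs = bits_on (A \<union> B) ys \<longleftrightarrow> bits_on A xs = bits_on A ys \<and> bits_on B xs = bits_on B ys"
  by (auto simp: bits_on_eq_iff)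

definition entropy_on :: "bool list pmf \<Rightarrow> nat set \<Rightarrow> real" where
  "entropy_on PX S = entropy_rv PX (bits_on S)"

lemma submodular_entropy_on:
  assumes "finite (set_pmf PX)"
  shows "submodular (entropy_on PX)"
  unfolding submodular_def
proof (intro allI)
  fix X Y :: "nat set"
  have "entropy_rv PX (\<lambda>xs. (bits_on (X - Y) xs, bits_on (Y - X) xs, bits_on (X \<inter> Y) xs))
      = entropy_on PX (X \<union> Y)"
    and "entropy_rv PX (\<lambda>xs. (bits_on (X - Y) xs, bits_on (X \<inter> Y) xs)) = entropy_on PX X"
    and "entropy_rv PX (\<lambda>xs. (bits_on (Y - X) xs, bits_on (X \<inter> Y) xs)) = entropy_on PX Y"
    unfolding entropy_on_def by (rule entropy_rv_cong, simp add: bits_on_eq_iff, blast)+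
  then show "entropy_on PX (X \<union> Y) + entropy_on PX (X \<inter> Y) \<le> entropy_on PX X + entropy_on PX Y"
    using entropy_rv_submodular[OF assms, of "bits_on (X - Y)" "bits_on (Y - X)" "bits_on (X \<inter> Y)"]
    by (simp add: entropy_on_def)
qed

section \<open>I.i.d. sequences\<close>

lemma finite_set_pmf_lists:
  fixes PX :: "'a::finite list pmf"
  assumes "\<And>xs. xs \<in> set_pmf PX \<Longrightarrow> length xs = n"
  shows "finite (set_pmf PX)"
proof (rule finite_subset)
  show "set_pmf PX \<subseteq> {xs. set xs \<subseteq> UNIV \<and> length xs = n}"
    using assms by auto
qed (use finite_lists_length_eq[of "UNIV :: 'a set" n] in simp)

lemma finite_set_replicate_pmf: "finite (set_pmf p) \<Longrightarrow> finite (set_pmf (replicate_pmf n p))"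
  by (simp add: set_replicate_pmf lists_eq_set finite_lists_length_eq)

lemma map_pmf_map_replicate_pmf: "map_pmf (map f) (replicate_pmf n p) = replicate_pmf n (map_pmf f p)"
proof (induction n)
  case (Suc n)
  then show ?case
    by (simp add: Suc.IH[symmetric] map_bind_pmf bind_map_pmf)
qed simp

lemma replicate_pmf_pair_pmf:
  "replicate_pmf n (pair_pmf p q)
   = map_pmf (\<lambda>(xs, ys). zip xs ys) (pair_pmf (replicate_pmf n p) (replicate_pmf n q))"
proof (induction n)
  case (Suc n)
  have "replicate_pmf (Suc n) (pair_pmf p q)
      = bind_pmf p (\<lambda>x. bind_pmf q (\<lambda>y. bind_pmf (replicate_pmf n p) (\<lambda>xs.
          bind_pmf (replicate_pmf n q) (\<lambda>ys. return_pmf ((x, y) # zip xs ys)))))"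
    by (simp only: replicate_pmf.simps Suc.IH)
       (simp add: pair_pmf_def bind_assoc_pmf bind_return_pmf map_bind_pmf bind_map_pmf split_beta)
  also have "\<dots> = bind_pmf p (\<lambda>x. bind_pmf (replicate_pmf n p) (\<lambda>xs. bind_pmf q (\<lambda>y.
          bind_pmf (replicate_pmf n q) (\<lambda>ys. return_pmf ((x, y) # zip xs ys)))))"
    by (subst bind_commute_pmf) (rule refl)
  also have "\<dots> = map_pmf (\<lambda>(xs, ys). zip xs ys)
      (pair_pmf (replicate_pmf (Suc n) p) (replicate_pmf (Suc n) q))"
    by (simp add: pair_pmf_def bind_assoc_pmf bind_return_pmf map_bind_pmf bind_map_pmf)
  finally show ?case .
qed (simp add: pair_return_pmf)

lemma map_pmf_nth_replicate_pmf: "j < n \<Longrightarrow> map_pmf (\<lambda>xs. xs ! j) (replicate_pmf n p) = p"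
proof (induction n arbitrary: j)
  case (Suc n)
  show ?case
  proof (cases j)
    case 0
    then show ?thesis
      by (simp add: map_bind_pmf map_return_pmf bind_return_pmf')
  next
    case (Suc k)
    then have "map_pmf (\<lambda>xs. xs ! j) (replicate_pmf (Suc n) p)
             = bind_pmf p (\<lambda>_. map_pmf (\<lambda>xs. xs ! k) (replicate_pmf n p))"
      by (simp add: map_pmf_def bind_assoc_pmf bind_return_pmf)
    also have "\<dots> = p"
      using Suc.IH[of k] Suc.prems \<open>j = Suc k\<close> by simp
    finally show ?thesis .
  qed
qed simp

lemma expectation_nth_replicate_bernoulli:
  assumes "j < n" and "0 \<le> r" and "r \<le> 1"
  shows "measure_pmf.expectation (replicate_pmf n (bernoulli_pmf r)) (\<lambda>cs. of_bool (cs ! j)) = r"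
proof -
  have "measure_pmf.expectation (replicate_pmf n (bernoulli_pmf r)) (\<lambda>cs. of_bool (cs ! j))
      = measure_pmf.expectation (map_pmf (\<lambda>cs. cs ! j) (replicate_pmf n (bernoulli_pmf r))) (\<lambda>b. of_bool b :: real)"
    by simp
  also have "\<dots> = measure_pmf.expectation (bernoulli_pmf r) (\<lambda>b. of_bool b)"
    by (simp only: map_pmf_nth_replicate_pmf[OF assms(1)])
  also have "\<dots> = r"
    using assms by (subst integral_measure_pmf_real[of UNIV]) (auto simp: UNIV_bool)
  finally show ?thesis .
qed

section \<open>Thinning the observed slots\<close>

definition slots :: "('g \<Rightarrow> bool) \<Rightarrow> 'g list \<Rightarrow> nat set" where
  "slots P gs = {t. t < length gs \<and> P (gs ! t)}"

lemma slots_map: "slots P (map f gs) = slots (\<lambda>g. P (f g)) gs"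
  by (auto simp: slots_def)

text \<open>For a pattern of flags (seen by receiver \<open>i\<close>, seen by receiver 3), the entropy of the bits
  seen by receiver \<open>i\<close> given those seen by receiver 3.\<close>

definition masked_cond_entropy :: "bool list pmf \<Rightarrow> (bool \<times> bool) list \<Rightarrow> real" where
  "masked_cond_entropy PX bs = entropy_on PX (slots fst bs \<union> slots snd bs) - entropy_on PX (slots snd bs)"

definition entropy_increment :: "bool list pmf \<Rightarrow> (bool \<times> bool) list \<Rightarrow> nat \<Rightarrow> real" where
  "entropy_increment PX bs j =
     entropy_on PX (slots snd bs \<union> slots fst bs \<inter> {..<Suc j})
     - entropy_on PX (slots snd bs \<union> slots fst bs \<inter> {..<j})"

lemma entropy_increment_eq_0: "j \<notin> slots fst bs \<Longrightarrow> entropy_increment PX bs j = 0"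
proof -
  assume "j \<notin> slots fst bs"
  then have "slots fst bs \<inter> {..<Suc j} = slots fst bs \<inter> {..<j}"
    by (auto simp: lessThan_Suc)
  then show ?thesis
    by (simp add: entropy_increment_def)
qed

lemma masked_cond_entropy_eq_sum_increments:
  assumes "length bs = n"
  shows "masked_cond_entropy PX bs = (\<Sum>j<n. entropy_increment PX bs j)"
proof -
  have "slots fst bs \<inter> {..<n} = slots fst bs"
    using assms by (auto simp: slots_def)
  then show ?thesis
    using sum_lessThan_telescope[of "\<lambda>j. entropy_on PX (slots snd bs \<union> slots fst bs \<inter> {..<j})" n]
    by (simp add: masked_cond_entropy_def entropy_increment_def Un_commute)
qed

definition thin :: "(bool \<times> bool) list \<Rightarrow> bool list \<Rightarrow> (bool \<times> bool) list" where
  "thin bs cs = map (\<lambda>((a, c), b). (a \<and> b, c)) (zip bs cs)"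

lemma masked_cond_entropy_thin_ge:
  assumes fin: "finite (set_pmf PX)" and len: "length bs = n" "length cs = n"
  shows "(\<Sum>j<n. of_bool (cs ! j) * entropy_increment PX bs j) \<le> masked_cond_entropy PX (thin bs cs)"
proof -
  define T where "T = {t \<in> slots fst bs. cs ! t}"
  have T: "slots fst (thin bs cs) = T" "slots snd (thin bs cs) = slots snd bs"
          "T \<inter> {..<n} = T" "T \<subseteq> slots fst bs"
    using len by (auto simp: slots_def thin_def T_def split_beta)
  have "(\<Sum>j<n. of_bool (cs ! j) * entropy_increment PX bs j)
      = (\<Sum>j<n. if j \<in> T then entropy_increment PX bs j else 0)"
    by (intro sum.cong) (auto simp: T_def entropy_increment_eq_0)
  also have "\<dots> \<le> entropy_on PX (slots snd bs \<union> T \<inter> {..<n}) - entropy_on PX (slots snd bs)"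
    using submodular_increments_le[OF submodular_entropy_on[OF fin] T(4), where k = n and A = "slots snd bs"]
    by (simp only: entropy_increment_def)
  also have "\<dots> = masked_cond_entropy PX (thin bs cs)"
    by (simp add: masked_cond_entropy_def T Un_commute)
  finally show ?thesis .
qed

lemma expectation_thin_ge:
  assumes finPX: "finite (set_pmf PX)" and finP: "finite (set_pmf P)"
    and len: "\<And>bs. bs \<in> set_pmf P \<Longrightarrow> length bs = n" and r: "0 \<le> r" "r \<le> 1"
  shows "r * measure_pmf.expectation P (masked_cond_entropy PX)
       \<le> measure_pmf.expectation (pair_pmf P (replicate_pmf n (bernoulli_pmf r)))
            (\<lambda>(bs, cs). masked_cond_entropy PX (thin bs cs))"
proof -
  define C where "C = replicate_pmf n (bernoulli_pmf r)"
  have finC: "finite (set_pmf C)"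
    by (simp add: C_def finite_set_replicate_pmf)
  have lenC: "length cs = n" if "cs \<in> set_pmf C" for cs
    using that by (simp add: C_def set_replicate_pmf)
  have "r * measure_pmf.expectation P (masked_cond_entropy PX)
      = r * measure_pmf.expectation P (\<lambda>bs. \<Sum>j<n. entropy_increment PX bs j)"
    using len by (intro arg_cong[where f = "(*) r"] integral_cong_AE)
      (auto simp: AE_measure_pmf_iff masked_cond_entropy_eq_sum_increments)
  also have "\<dots> = (\<Sum>j<n. measure_pmf.expectation C (\<lambda>cs. of_bool (cs ! j))
                         * measure_pmf.expectation P (\<lambda>bs. entropy_increment PX bs j))"
    using finP r by (simp add: C_def expectation_nth_replicate_bernoulli integrable_measure_pmf_finite
        sum_distrib_left)
  also have "\<dots> = measure_pmf.expectation C
                   (\<lambda>cs. \<Sum>j<n. of_bool (cs ! j) * measure_pmf.expectation P (\<lambda>bs. entropy_increment PX bs j))"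
    by (simp only: Bochner_Integration.integral_sum[OF integrable_measure_pmf_finite[OF finC]]
        integral_mult_left_zero)
  also have "\<dots> = measure_pmf.expectation (pair_pmf P C)
                   (\<lambda>(bs, cs). \<Sum>j<n. of_bool (cs ! j) * entropy_increment PX bs j)"
    unfolding expectation_pair_pmf[OF finP finC] prod.case
    by (simp only: Bochner_Integration.integral_sum[OF integrable_measure_pmf_finite[OF finP]]
        integral_mult_right_zero)
  also have "\<dots> \<le> measure_pmf.expectation (pair_pmf P C) (\<lambda>(bs, cs). masked_cond_entropy PX (thin bs cs))"
    using finP finC len lenC masked_cond_entropy_thin_ge[OF finPX]
    by (intro integral_mono_AE integrable_measure_pmf_finite) (auto simp: AE_measure_pmf_iff)
  finally show ?thesis
    by (simp add: C_def)
qed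

section \<open>The fading channel\<close>

lemma out_seq_eq_iff:
  assumes "length xs = length gs" and "length ys = length gs"
  shows "out_seq G xs gs = out_seq G ys gs \<longleftrightarrow> bits_on (slots G gs) xs = bits_on (slots G gs) ys"
  using assms by (auto simp: out_seq_def list_eq_iff_nth_eq bits_on_eq_iff slots_def)

lemma entropy_rv_observing_slots:
  fixes PX :: "bool list pmf" and PG :: "'g pmf" and S :: "'g list \<Rightarrow> nat set"
  assumes len: "\<And>xs. xs \<in> set_pmf PX \<Longrightarrow> length xs = n" and finG: "finite (set_pmf PG)"
    and obs: "\<And>xs ys gs gs'. length xs = length gs \<Longrightarrow> length ys = length gs' \<Longrightarrow>
      \<Phi> (xs, gs) = \<Phi> (ys, gs') \<longleftrightarrow> gs = gs' \<and> bits_on (S gs) xs = bits_on (S gs) ys"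
  shows "entropy_rv (pair_pmf PX (replicate_pmf n PG)) \<Phi>
       = entropy_rv (replicate_pmf n PG) (\<lambda>gs. gs)
         + measure_pmf.expectation (replicate_pmf n PG) (\<lambda>gs. entropy_on PX (S gs))"
proof -
  have "entropy_rv (pair_pmf PX (replicate_pmf n PG)) \<Phi>
      = entropy_rv (pair_pmf PX (replicate_pmf n PG)) (\<lambda>(xs, gs). (bits_on (S gs) xs, gs))"
  proof (rule entropy_rv_cong)
    fix v w assume "v \<in> set_pmf (pair_pmf PX (replicate_pmf n PG))" "w \<in> set_pmf (pair_pmf PX (replicate_pmf n PG))"
    then obtain xs gs ys gs' where vw: "v = (xs, gs)" "w = (ys, gs')"
      and "length xs = length gs" "length ys = length gs'"
      using len by (cases v, cases w) (auto simp: set_replicate_pmf)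
    from obs[OF this(3,4)] show "\<Phi> v = \<Phi> w \<longleftrightarrow> (case v of (xs, gs) \<Rightarrow> (bits_on (S gs) xs, gs))
        = (case w of (xs, gs) \<Rightarrow> (bits_on (S gs) xs, gs))"
      unfolding vw by auto
  qed
  also have "\<dots> = entropy_rv (replicate_pmf n PG) (\<lambda>gs. gs)
         + measure_pmf.expectation (replicate_pmf n PG) (\<lambda>gs. entropy_on PX (S gs))"
    unfolding entropy_on_def
    by (rule entropy_rv_pair_pmf[OF finite_set_pmf_lists[OF len] finite_set_replicate_pmf[OF finG]])
  finally show ?thesis .
qed

lemma cond_entropy_out_seq:
  fixes PX :: "bool list pmf" and PG :: "gain pmf"
  assumes len: "\<And>xs. xs \<in> set_pmf PX \<Longrightarrow> length xs = n"
  defines "D \<equiv> pair_pmf PX (replicate_pmf n PG)"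
  shows "cond_entropy D (\<lambda>(xs, gs). out_seq Gi xs gs) (\<lambda>(xs, gs). (out_seq Gj xs gs, gs))
       = measure_pmf.expectation (replicate_pmf n (map_pmf (\<lambda>\<gamma>. (Gi \<gamma>, Gj \<gamma>)) PG))
           (masked_cond_entropy PX)"
proof -
  define Q where "Q = replicate_pmf n PG"
  have finQ: "finite (set_pmf Q)"
    by (simp add: Q_def finite_set_replicate_pmf)
  have finD: "finite (set_pmf D)"
    using finQ finite_set_pmf_lists[OF len] by (simp add: D_def Q_def)
  have joint: "entropy_rv D (\<lambda>w. ((\<lambda>(xs, gs). out_seq Gi xs gs) w, (\<lambda>(xs, gs). (out_seq Gj xs gs, gs)) w))
      = entropy_rv Q (\<lambda>gs. gs) + measure_pmf.expectation Q (\<lambda>gs. entropy_on PX (slots Gi gs \<union> slots Gj gs))"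
    unfolding D_def Q_def
    by (rule entropy_rv_observing_slots[OF len]) (auto simp: out_seq_eq_iff bits_on_Un_eq_iff)
  have marginal: "entropy_rv D (\<lambda>(xs, gs). (out_seq Gj xs gs, gs))
      = entropy_rv Q (\<lambda>gs. gs) + measure_pmf.expectation Q (\<lambda>gs. entropy_on PX (slots Gj gs))"
    unfolding D_def Q_def
    by (rule entropy_rv_observing_slots[OF len]) (auto simp: out_seq_eq_iff)
  have "cond_entropy D (\<lambda>(xs, gs). out_seq Gi xs gs) (\<lambda>(xs, gs). (out_seq Gj xs gs, gs))
      = measure_pmf.expectation Q (\<lambda>gs. entropy_on PX (slots Gi gs \<union> slots Gj gs))
        - measure_pmf.expectation Q (\<lambda>gs. entropy_on PX (slots Gj gs))"
    unfolding cond_entropy_eq_entropy_rv_diff[OF finD] joint marginal by simp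
  also have "\<dots> = measure_pmf.expectation Q (\<lambda>gs. masked_cond_entropy PX (map (\<lambda>\<gamma>. (Gi \<gamma>, Gj \<gamma>)) gs))"
    using finQ by (simp add: masked_cond_entropy_def slots_map integrable_measure_pmf_finite
        flip: Bochner_Integration.integral_diff)
  also have "\<dots> = measure_pmf.expectation (replicate_pmf n (map_pmf (\<lambda>\<gamma>. (Gi \<gamma>, Gj \<gamma>)) PG))
           (masked_cond_entropy PX)"
    by (simp add: Q_def flip: map_pmf_map_replicate_pmf)
  finally show ?thesis .
qed

lemma sum_UNIV_prod: "(\<Sum>x\<in>UNIV. f x) = (\<Sum>a\<in>UNIV. \<Sum>b\<in>UNIV. f (a, b))"
  by (simp add: sum.cartesian_product flip: UNIV_Times_UNIV)

lemma pmf_map_pmf_UNIV: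
  "pmf (map_pmf f (p :: 'a::finite pmf)) y = (\<Sum>x\<in>UNIV. if f x = y then pmf p x else 0)"
  by (simp add: pmf_map measure_measure_pmf_finite sum.If_cases vimage_def Collect_conv_if)

lemma measure_pmf_UNIV:
  "measure_pmf.prob (p :: 'a::finite pmf) A = (\<Sum>x\<in>UNIV. if x \<in> A then pmf p x else 0)"
  by (simp add: measure_measure_pmf_finite sum.If_cases)

lemma gain_pair_coupling:
  fixes PG :: "gain pmf" and p1 p2 :: real
  assumes p: "0 \<le> p2" "p2 \<le> p1" "p1 \<le> 1" "0 < p1"
    and m1: "map_pmf G1 PG = bernoulli_pmf p1"
    and m2: "map_pmf G2 PG = bernoulli_pmf p2"
    and d13: "measure_pmf.prob PG {g. G1 g \<and> G3 g} = 0"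
    and d23: "measure_pmf.prob PG {g. G2 g \<and> G3 g} = 0"
  shows "map_pmf (\<lambda>\<gamma>. (G2 \<gamma>, G3 \<gamma>)) PG
       = map_pmf (\<lambda>((a, c), b). (a \<and> b, c))
           (pair_pmf (map_pmf (\<lambda>\<gamma>. (G1 \<gamma>, G3 \<gamma>)) PG) (bernoulli_pmf (p2 / p1)))"
proof (rule pmf_eqI)
  fix ab :: "bool \<times> bool"
  define r where "r = p2 / p1"
  have r: "0 \<le> r" "r \<le> 1" "p2 = p1 * r"
    using p by (simp_all add: r_def)
  define q where "q = pmf PG"
  note expand = sum_UNIV_prod UNIV_bool G1_def G2_def G3_def q_def[symmetric]
  have nonneg: "0 \<le> q x" for x
    by (simp add: q_def)
  have "q (True, False, True) + q (True, True, True) = 0" "q (False, True, True) + q (True, True, True) = 0"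
    using d13 d23 unfolding measure_pmf_UNIV expand by simp_all
  then have zero: "q (True, False, True) = 0" "q (True, True, True) = 0" "q (False, True, True) = 0"
    using nonneg[of "(True, False, True)"] nonneg[of "(True, True, True)"] nonneg[of "(False, True, True)"]
    by linarith+
  have "pmf (map_pmf G1 PG) True = p1" "pmf (map_pmf G2 PG) True = p2" "(\<Sum>x\<in>UNIV. q x) = 1"
    using p by (simp_all add: m1 m2 q_def sum_pmf_eq_1)
  then have total:
    "q (True, False, False) = p1 - q (True, True, False)"
    "q (False, True, False) = p1 * r - q (True, True, False)"
    "q (False, False, False) = 1 - p1 - p1 * r + q (True, True, False) - q (False, False, True)"
    unfolding pmf_map_pmf_UNIV expand using zero r(3) by simp_all
  show "pmf (map_pmf (\<lambda>\<gamma>. (G2 \<gamma>, G3 \<gamma>)) PG) ab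
      = pmf (map_pmf (\<lambda>((a, c), b). (a \<and> b, c))
           (pair_pmf (map_pmf (\<lambda>\<gamma>. (G1 \<gamma>, G3 \<gamma>)) PG) (bernoulli_pmf (p2 / p1)))) ab"
    unfolding pmf_map_pmf_UNIV[of _ "pair_pmf _ _"] pmf_pair pmf_map_pmf_UNIV expand r_def[symmetric]
    using r(1,2) by (cases ab; cases "fst ab"; cases "snd ab") (simp_all add: zero total algebra_simps)
qed

theorem lemma1:
  fixes n :: nat and PX :: "bool list pmf" and PG :: "gain pmf" and p1 p2 p3 :: real
  assumes len: "\<And>xs. xs \<in> set_pmf PX \<Longrightarrow> length xs = n"
    and p: "0 \<le> p2" "p2 \<le> p1" "p1 \<le> 1" "p1 > 0" "0 \<le> p3" "p3 \<le> 1"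
    and m1: "map_pmf G1 PG = bernoulli_pmf p1"
    and m2: "map_pmf G2 PG = bernoulli_pmf p2"
    and m3: "map_pmf G3 PG = bernoulli_pmf p3"
    and d12: "measure_pmf.prob PG {g. G1 g \<and> G2 g} = 0"
    and d13: "measure_pmf.prob PG {g. G1 g \<and> G3 g} = 0"
    and d23: "measure_pmf.prob PG {g. G2 g \<and> G3 g} = 0"
  defines "D \<equiv> pair_pmf PX (replicate_pmf n PG)"
  shows "cond_entropy D (\<lambda>(xs, gs). out_seq G2 xs gs)
                        (\<lambda>(xs, gs). (out_seq G3 xs gs, gs))
         \<ge> p2 / p1 * cond_entropy D (\<lambda>(xs, gs). out_seq G1 xs gs)
                        (\<lambda>(xs, gs). (out_seq G3 xs gs, gs))"
proof -
  define r where "r = p2 / p1"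
  define P1 where "P1 = replicate_pmf n (map_pmf (\<lambda>\<gamma>. (G1 \<gamma>, G3 \<gamma>)) PG)"
  define C where "C = replicate_pmf n (bernoulli_pmf r)"
  have r: "0 \<le> r" "r \<le> 1"
    using p by (simp_all add: r_def)
  have fin: "finite (set_pmf PX)" "finite (set_pmf P1)"
    using len by (simp_all add: finite_set_pmf_lists P1_def finite_set_replicate_pmf)
  have lenP1: "length bs = n" if "bs \<in> set_pmf P1" for bs
    using that by (simp add: P1_def set_replicate_pmf)
  have thinned: "replicate_pmf n (map_pmf (\<lambda>\<gamma>. (G2 \<gamma>, G3 \<gamma>)) PG)
      = map_pmf (\<lambda>(bs, cs). thin bs cs) (pair_pmf P1 C)"
    unfolding gain_pair_coupling[OF p(1-4) m1 m2 d13 d23] r_def[symmetric]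
    by (simp add: P1_def C_def thin_def replicate_pmf_pair_pmf map_pmf_comp case_prod_unfold
        flip: map_pmf_map_replicate_pmf)
  have "p2 / p1 * cond_entropy D (\<lambda>(xs, gs). out_seq G1 xs gs) (\<lambda>(xs, gs). (out_seq G3 xs gs, gs))
      = r * measure_pmf.expectation P1 (masked_cond_entropy PX)"
    unfolding D_def P1_def r_def by (simp only: cond_entropy_out_seq[OF len])
  also have "\<dots> \<le> measure_pmf.expectation (pair_pmf P1 C) (\<lambda>(bs, cs). masked_cond_entropy PX (thin bs cs))"
    unfolding C_def using fin lenP1 r by (rule expectation_thin_ge)
  also have "\<dots> = measure_pmf.expectation (replicate_pmf n (map_pmf (\<lambda>\<gamma>. (G2 \<gamma>, G3 \<gamma>)) PG))
                     (masked_cond_entropy PX)"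
    by (simp add: thinned case_prod_unfold)
  also have "\<dots> = cond_entropy D (\<lambda>(xs, gs). out_seq G2 xs gs) (\<lambda>(xs, gs). (out_seq G3 xs gs, gs))"
    unfolding D_def by (rule cond_entropy_out_seq[OF len, symmetric])
  finally show ?thesis .
qed

end
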